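(* Let $\mathrm{N}_1 = \mathrm{nM}([2,4,5,6,8,8])$. Then $\mathrm{N}_1(k) = \mathrm{N}(k)$ for all $k \in \mathbb{N} \setminus \{2^m - m + 1 : m \in \mathbb{N}, m \ge 3\}$, while for $k = 2^m - m + 1$ with $m \in \mathbb{N}$, $m \ge 3$, we have $\mathrm{N}_1(k) = \mathrm{N}(k) - 1 = 2^m$.
   Context: $\mathrm{N} : \mathbb{N} \to \mathbb{N}$ is defined by $\mathrm{N}(1) = 2$ and $\mathrm{N}(k) = \max_{i \in \{2,\dots,k\}} \min(2i, \mathrm{N}(k-i+1)+i)$ for $k \ge 2$. $[2,4,5,6,8,8]$ denotes the function $f : \mathbb{N} \to \mathbb{N} \cup \{+\infty\}$ with $(f(1),\dots,f(6)) = (2,4,5,6,8,8)$ and $f(k) = +\infty$ for $k \ge 7$. For $g : \mathbb{N} \to \mathbb{N} \cup \{+\infty\}$ and $k \ge 2$, $m \ge 4$, $\mathrm{pdp}_g(k,m)$ is the set of pairs $(e_0,e_1) \in \mathbb{N}^2$ with (i) $e_0,e_1 \ge 2$; (ii) $e_0,e_1 \le k$; (iii) $e_0+e_1 = m$; (iv) $e_0 \le e_1$; (v) $g(k-e_\varepsilon+1)+e_\varepsilon \ge m$ for both $\varepsilon \in \{0,1\}$. For $f$ with $f(1) = 2$, $f' = \mathrm{nM}(f)$ is defined by $f'(1) = 2$ and, for $k > 1$, $f'(k) = \min(m, f(k))$ where $m$ is the largest integer in $\{4,\dots,2k\}$ with $\mathrm{pdp}_{f'}(k,m) \ne \emptyset$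 (this uses only $f'(k')$ for $k' < k$). *)

theory Defs
  imports Main "HOL-Library.Extended_Nat"
begin

text \<open>The function N: N(1) = 2 and N(k) = max over i in {2..k} of min(2i, N(k-i+1)+i).
  Only arguments k >= 1 are meaningful (the value at 0 is an artifact).\<close>
function Nfun :: "nat \<Rightarrow> nat" where
  "Nfun k = (if k \<le> 1 then 2
             else Max ((\<lambda>i. min (2 * i) (Nfun (k - i + 1) + i)) ` {2..k}))"
  by pat_completeness auto
termination
  by (relation "measure id") auto

definition f_init :: "nat \<Rightarrow> enat" where
  "f_init k = (if 1 \<le> k \<and> k \<le> 6 then enat ([2,4,5,6,8,8] ! (k - 1)) else \<infinity>)"

definition pdp :: "(nat \<Rightarrow> enat) \<Rightarrow> nat \<Rightarrow> nat \<Rightarrow> (nat \<times> nat) set" where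
  "pdp g k m = {(e0, e1). 2 \<le> e0 \<and> 2 \<le> e1 \<and> e0 \<le> k \<and> e1 \<le> k \<and> e0 + e1 = m \<and> e0 \<le> e1
       \<and> g (k - e0 + 1) + enat e0 \<ge> enat m \<and> g (k - e1 + 1) + enat e1 \<ge> enat m}"

text \<open>nM(f): f'(1) = 2 and for k > 1, f'(k) = min(m, f(k)) with m the largest integer in
  {4..2k} such that pdp_{f'}(k,m) is nonempty. pdp_{f'}(k,m) only consults f'(j) for j < k,
  so we pass f' restricted to arguments below k (values at j >= k are never used).\<close>
function nM :: "(nat \<Rightarrow> enat) \<Rightarrow> nat \<Rightarrow> enat" where
  "nM f k = (if k \<le> 1 then 2
             else min (enat (GREATEST m. 4 \<le> m \<and> m \<le> 2 * k \<and>
                         pdp (\<lambda>j. if j < k then nM f j else \<infinity>) k m \<noteq> {}))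
                      (f k))"
  by pat_completeness auto
termination
  by (relation "measure snd") auto

end

theory Submission imports Defs begin

text \<open>Split the positive integers into blocks 2^M - M \<le> k < 2^(M+1) - M - 1, M \<ge> 1. On block M
  one has N(k) = k + M: the split i = (k + M + 1) div 2 leaves a remainder k - i + 1 in block M - 1
  or above, while any i with 2i > k + M leaves a remainder in a lower block. The same block
  analysis applies to nM, except at the second point k = 2^M - M + 1 of a block with M \<ge> 3: the
  only splits that could reach k + M leave the first two points of block M - 1 as remainders, and
  the second of these is itself such an exceptional point and one short, so the value drops to
  k + M - 1 = 2^M. The start values [2,4,5,6,8,8] are these values for k \<le> 6 and cover the case
  M = 3, where the remainder point is not yet exceptional.\<close>

declare Nfun.simps[simp del] nM.simps[simp del]

definition block_start :: "nat \<Rightarrow> nat" where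
  "block_start M = 2 ^ M - M"

lemma block_start_add_self: "block_start M + M = 2 ^ M"
  using less_exp[of M] unfolding block_start_def by simp

lemma double_le_power_two: "1 \<le> M \<Longrightarrow> 2 * M \<le> (2::nat) ^ M"
  by (induction M rule: dec_induct) (simp_all add: order_trans[OF _ one_le_power])

lemma block_start_mono: "M \<le> M' \<Longrightarrow> block_start M \<le> block_start M'"
proof (induction M' rule: dec_induct)
  case (step n)
  have "1 \<le> (2::nat) ^ n" by simp
  then show ?case
    using step block_start_add_self[of n] block_start_add_self[of "Suc n"] by simp
qed simp

lemma block_start_less_Suc: "1 \<le> M \<Longrightarrow> block_start M < block_start (Suc M)"
  using double_le_power_two[of M] block_start_add_self[of M] block_start_add_self[of "Suc M"]
  by simp

definition in_block :: "nat \<Rightarrow> nat \<Rightarrow> bool" where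
  "in_block k M \<longleftrightarrow> 1 \<le> M \<and> block_start M \<le> k \<and> k < block_start (Suc M)"

lemma in_block_less: "in_block j M' \<Longrightarrow> j < block_start M \<Longrightarrow> M' < M"
  unfolding in_block_def using block_start_mono[of M M'] by (meson leI le_trans not_le)

lemma in_block_ge: "in_block j M' \<Longrightarrow> block_start M \<le> j \<Longrightarrow> M \<le> M'"
  unfolding in_block_def using block_start_mono[of "Suc M'" M]
  by (meson leI le_trans not_less_eq_eq not_le)

lemma in_block_unique: "in_block j M \<Longrightarrow> in_block j M' \<Longrightarrow> M = M'"
  using in_block_ge[of j M M'] in_block_ge[of j M' M] unfolding in_block_def by simp

lemma in_block_block_start: "1 \<le> M \<Longrightarrow> in_block (block_start M) M"
  unfolding in_block_def using block_start_less_Suc by auto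

lemma in_block_one: "in_block 1 1"
  unfolding in_block_def block_start_def by simp

lemma in_block_exists: "1 \<le> k \<Longrightarrow> \<exists>M. in_block k M"
proof (induction k rule: dec_induct)
  case base
  then show ?case using in_block_one by blast
next
  case (step n)
  then obtain M where M: "in_block n M" by blast
  show ?case
  proof (cases "Suc n < block_start (Suc M)")
    case True
    then show ?thesis using M unfolding in_block_def by auto
  next
    case False
    then have "Suc n = block_start (Suc M)" using M unfolding in_block_def by simp
    then show ?thesis using in_block_block_start[of "Suc M"] by auto
  qed
qed

lemma in_block_exists_add_one: "\<exists>M. in_block (n + 1) M"
  using in_block_exists by simp

lemma in_block_ge_two: "in_block k M \<Longrightarrow> 2 \<le> k \<Longrightarrow> 2 \<le> M"
  using in_block_unique[OF _ in_block_one] unfolding in_block_def block_start_def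
  by (cases "M = 1") auto

section \<open>The function N\<close>

lemma Nfun_step:
  assumes k: "in_block k M" "2 \<le> k"
    and IH: "\<And>j Mj. j < k \<Longrightarrow> in_block j Mj \<Longrightarrow> Nfun j = j + Mj"
  shows "Nfun k = k + M"
proof -
  obtain L where M_Suc: "M = Suc L" "1 \<le> L"
    using in_block_ge_two[OF k] by (cases M) auto
  have bsM: "block_start M + M = 2 * 2 ^ L" and bsL: "block_start L + L = 2 ^ L"
    and bsSM: "block_start (Suc M) + Suc M = 2 * 2 ^ M"
    using block_start_add_self[of M] block_start_add_self[of L] block_start_add_self[of "Suc M"]
      M_Suc by simp_all
  have kM: "block_start M \<le> k" "k < block_start (Suc M)"
    using k unfolding in_block_def by auto
  have "M \<le> k" using bsM bsL double_le_power_two[OF M_Suc(2)] kM M_Suc by linarith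
  define F where "F = (\<lambda>i. min (2 * i) (Nfun (k - i + 1) + i))"
  have Nk: "Nfun k = Max (F ` {2..k})"
    using k by (subst Nfun.simps) (simp add: F_def)
  have F_remainder: "F i = min (2 * i) (k - i + 1 + Mj + i)"
    if "i \<in> {2..k}" "in_block (k - i + 1) Mj" for i Mj
    using IH[of "k - i + 1" Mj] that unfolding F_def by auto
  have upper: "F i \<le> k + M" if i: "i \<in> {2..k}" for i
  proof (cases "2 * i \<le> k + M")
    case False
    obtain Mj where Mj: "in_block (k - i + 1) Mj" using in_block_exists_add_one by blast
    have "k - i + 1 < block_start M"
      using False i bsSM block_start_add_self[of M] kM
      by (simp only: atLeastAtMost_iff) linarith
    then have "Mj < M" using in_block_less[OF Mj] by blast
    moreover have "F i \<le> k - i + 1 + Mj + i" using F_remainder[OF i Mj] by simp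
    ultimately show ?thesis using i by simp
  qed (simp add: F_def)
  define i where "i = (k + M + 1) div 2"
  have i: "i \<in> {2..k}" using k M_Suc \<open>M \<le> k\<close> unfolding i_def by auto
  obtain Mj where Mj: "in_block (k - i + 1) Mj" using in_block_exists_add_one by blast
  have "block_start L \<le> k - i + 1"
    using i bsM bsL kM M_Suc unfolding i_def by auto
  then have "L \<le> Mj" using in_block_ge[OF Mj] by blast
  moreover have "k + M \<le> 2 * i" unfolding i_def by linarith
  ultimately have "F i = k + M"
    using upper[OF i] F_remainder[OF i Mj] M_Suc i by simp
  then have "Max (F ` {2..k}) = k + M"
    using upper i by (intro Max_eqI) (auto intro!: image_eqI[of _ F i])
  then show ?thesis using Nk by simp
qed

lemma Nfun_in_block: "in_block k M \<Longrightarrow> Nfun k = k + M"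
proof (induction k arbitrary: M rule: less_induct)
  case (less k)
  show ?case
  proof (cases "2 \<le> k")
    case True
    then show ?thesis using Nfun_step less by blast
  next
    case False
    then have "k = 1" using less.prems block_start_mono[of 1 M]
      unfolding in_block_def block_start_def by auto
    moreover have "M = 1" using less.prems in_block_unique[OF _ in_block_one] \<open>k = 1\<close> by blast
    ultimately show ?thesis by (simp add: Nfun.simps)
  qed
qed

section \<open>The function nM([2,4,5,6,8,8])\<close>

definition exceptional :: "nat \<Rightarrow> nat \<Rightarrow> bool" where
  "exceptional k M \<longleftrightarrow> 3 \<le> M \<and> k = block_start M + 1"

definition N1_val :: "nat \<Rightarrow> nat \<Rightarrow> nat" where
  "N1_val k M = (if exceptional k M then k + M - 1 else k + M)"

lemma N1_val_le: "N1_val k M \<le> k + M"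
  and N1_val_ge: "k + M \<le> N1_val k M + 1"
  and N1_val_regular: "\<not> exceptional k M \<Longrightarrow> N1_val k M = k + M"
  and N1_val_exceptional: "exceptional k M \<Longrightarrow> N1_val k M = k + M - 1"
  unfolding N1_val_def by auto

lemma mem_pdp_iff:
  assumes g: "\<And>j Mj. j < k \<Longrightarrow> in_block j Mj \<Longrightarrow> g j = enat (N1_val j Mj)"
    and e: "2 \<le> e0" "2 \<le> e1"
    and blocks: "in_block (k - e0 + 1) M0" "in_block (k - e1 + 1) M1"
  shows "(e0, e1) \<in> pdp g k m \<longleftrightarrow> e0 \<le> k \<and> e1 \<le> k \<and> e0 + e1 = m \<and> e0 \<le> e1
           \<and> m \<le> N1_val (k - e0 + 1) M0 + e0 \<and> m \<le> N1_val (k - e1 + 1) M1 + e1"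
proof -
  have "g (k - e0 + 1) = enat (N1_val (k - e0 + 1) M0)" if "e0 \<le> k"
    using g[OF _ blocks(1)] e that by simp
  moreover have "g (k - e1 + 1) = enat (N1_val (k - e1 + 1) M1)" if "e1 \<le> k"
    using g[OF _ blocks(2)] e that by simp
  ultimately show ?thesis using e unfolding pdp_def by auto
qed

text \<open>The witness splits use a part 2^(M-1), whose remainder lies in block M - 1 or above; in the
  regular case the other part leaves exactly the first point of block M - 1.\<close>

lemma pdp_exceptional_nonempty:
  assumes g: "\<And>j Mj. j < k \<Longrightarrow> in_block j Mj \<Longrightarrow> g j = enat (N1_val j Mj)"
    and k: "in_block k M" "exceptional k M"
  shows "pdp g k (N1_val k M) \<noteq> {}"
proof -
  obtain L where M_Suc: "M = Suc L" "2 \<le> L"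
    using k(2) unfolding exceptional_def by (cases M) auto
  define e where "e = (2::nat) ^ L"
  have "L + L \<le> e" using double_le_power_two[of L] M_Suc unfolding e_def by simp
  then have "2 \<le> e" using M_Suc by simp
  have bsL: "block_start L + L = e" using block_start_add_self unfolding e_def by simp
  have "k = block_start M + 1" using k(2) unfolding exceptional_def by simp
  then have kL: "k + L = 2 * e"
    using block_start_add_self[of M] M_Suc unfolding e_def by simp
  have val: "N1_val k M = e + e"
    using N1_val_exceptional[OF k(2)] kL M_Suc by simp
  have j: "k - e + 1 = block_start L + 1" "e \<le> k"
    using kL bsL \<open>L + L \<le> e\<close> by linarith+
  obtain Mj where Mj: "in_block (k - e + 1) Mj" using in_block_exists_add_one by blast
  have "L \<le> Mj" using in_block_ge[OF Mj] j by simp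
  then have "N1_val k M \<le> N1_val (k - e + 1) Mj + e"
    using N1_val_ge[of "k - e + 1" Mj] val j(1) bsL by linarith
  then have "(e, e) \<in> pdp g k (N1_val k M)"
    using mem_pdp_iff[OF g \<open>2 \<le> e\<close> \<open>2 \<le> e\<close> Mj Mj] j(2) val by simp
  then show ?thesis by blast
qed

lemma pdp_regular_nonempty:
  assumes g: "\<And>j Mj. j < k \<Longrightarrow> in_block j Mj \<Longrightarrow> g j = enat (N1_val j Mj)"
    and k: "in_block k M" "2 \<le> k" "\<not> exceptional k M"
  shows "pdp g k (N1_val k M) \<noteq> {}"
proof -
  obtain L where M_Suc: "M = Suc L" "1 \<le> L"
    using in_block_ge_two[OF k(1,2)] by (cases M) auto
  have bsM: "block_start M + M = 2 * 2 ^ L" and bsL: "block_start L + L = 2 ^ L"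
    using block_start_add_self[of M] block_start_add_self[of L] M_Suc by simp_all
  have kM: "block_start M \<le> k" "k < block_start (Suc M)" "N1_val k M = k + M"
    using k N1_val_regular unfolding in_block_def by auto
  have "2 * L \<le> 2 ^ L" using double_le_power_two M_Suc by simp
  define e0 where "e0 = (2::nat) ^ L"
  define e1 where "e1 = k + 1 - block_start L"
  have "2 \<le> e0" using \<open>2 * L \<le> 2 ^ L\<close> M_Suc unfolding e0_def by simp
  have "1 \<le> block_start L" "block_start L \<le> k"
    using block_start_mono[OF M_Suc(2)] block_start_mono[of L M] kM M_Suc
    by (simp_all add: block_start_def)
  then have j1: "k - e1 + 1 = block_start L" unfolding e1_def by linarith
  have j0: "block_start L \<le> k - e0 + 1" "k - e0 + 1 + e0 = k + 1"
    using kM bsM bsL M_Suc \<open>2 * L \<le> 2 ^ L\<close> unfolding e0_def by linarith+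
  have M1: "in_block (k - e1 + 1) L" using j1 in_block_block_start M_Suc by simp
  have "N1_val (k - e1 + 1) L = block_start L + L"
    using j1 N1_val_regular unfolding exceptional_def by simp
  then have part1: "N1_val k M \<le> N1_val (k - e1 + 1) L + e1"
    using kM j1 bsM bsL M_Suc \<open>2 * L \<le> 2 ^ L\<close> unfolding e1_def by linarith
  obtain M0 where M0: "in_block (k - e0 + 1) M0" using in_block_exists_add_one by blast
  have "L \<le> M0" using in_block_ge[OF M0 j0(1)] .
  have part0: "N1_val k M \<le> N1_val (k - e0 + 1) M0 + e0"
  proof (cases "M0 = L")
    case True
    have "\<not> exceptional (k - e0 + 1) M0"
    proof
      assume "exceptional (k - e0 + 1) M0"
      then have "3 \<le> L" "k - e0 + 1 = block_start L + 1"
        using True unfolding exceptional_def by auto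
      then have "k = block_start M + 1"
        using j0 bsM bsL M_Suc unfolding e0_def by linarith
      then show False using k(3) \<open>3 \<le> L\<close> M_Suc unfolding exceptional_def by simp
    qed
    then show ?thesis using N1_val_regular True kM j0 M_Suc by simp
  qed (use \<open>L \<le> M0\<close> N1_val_ge[of "k - e0 + 1" M0] kM j0 M_Suc in linarith)
  have "2 \<le> e1" "e0 \<le> e1" "e1 \<le> k" "e0 \<le> k" "e0 + e1 = N1_val k M"
    using kM bsM bsL M_Suc \<open>2 * L \<le> 2 ^ L\<close> \<open>1 \<le> block_start L\<close> \<open>block_start L \<le> k\<close>
    unfolding e0_def e1_def by linarith+
  then have "(e0, e1) \<in> pdp g k (N1_val k M)"
    using mem_pdp_iff[OF g \<open>2 \<le> e0\<close> _ M0 M1] part0 part1 by simp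
  then show ?thesis by blast
qed

lemma regular_split_bound:
  assumes k: "in_block k M" and m: "k + M + 1 \<le> m"
    and e: "e0 + e1 = m" "e0 \<le> e1" "e1 \<le> k"
    and M1: "in_block (k - e1 + 1) M1" and part1: "m \<le> N1_val (k - e1 + 1) M1 + e1"
  shows False
proof -
  have "M \<le> M1" using N1_val_le[of "k - e1 + 1" M1] part1 m e by linarith
  then have "block_start M \<le> k - e1 + 1"
    using M1 block_start_mono[of M M1] unfolding in_block_def by simp
  then show False
    using k e m block_start_add_self[of M] block_start_add_self[of "Suc M"]
    unfolding in_block_def by simp linarith
qed

lemma exceptional_split_part:
  assumes L: "3 \<le> L" and k: "k = block_start (Suc L) + 1" and m: "k + Suc L \<le> m"
    and e: "e \<le> k" and Mj: "in_block (k - e + 1) Mj" and part: "m \<le> N1_val (k - e + 1) Mj + e"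
  shows "(k - e + 1 = block_start L \<and> N1_val (k - e + 1) Mj = block_start L + L)
         \<or> block_start L + 2 \<le> k - e + 1"
proof -
  define j where "j = k - e + 1"
  have "L \<le> Mj" using N1_val_le[of j Mj] part m e unfolding j_def by linarith
  have "2 * L \<le> 2 ^ L" using double_le_power_two L by simp
  then have gap: "block_start L + 2 \<le> block_start (Suc L)"
    using block_start_add_self[of L] block_start_add_self[of "Suc L"] L by simp
  show ?thesis
  proof (cases "Mj = L")
    case False
    then have "block_start (Suc L) \<le> j"
      using \<open>L \<le> Mj\<close> Mj block_start_mono[of "Suc L" Mj] unfolding in_block_def j_def by simp
    then show ?thesis using gap unfolding j_def by simp
  next
    case True
    have "j \<noteq> block_start L + 1"
    proof
      assume "j = block_start L + 1"
      then have "N1_val j Mj = j + L - 1"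
        using N1_val_exceptional L True unfolding exceptional_def by simp
      then show False using part m e unfolding j_def by linarith
    qed
    moreover have "j = block_start L \<Longrightarrow> N1_val j Mj = block_start L + L"
      using N1_val_regular True unfolding exceptional_def by simp
    ultimately show ?thesis using Mj True unfolding in_block_def j_def by fastforce
  qed
qed

lemma exceptional_split_bound:
  assumes L: "3 \<le> L" and k: "k = block_start (Suc L) + 1" and m: "k + Suc L \<le> m"
    and e: "e0 + e1 = m" "e0 \<le> k" "e1 \<le> k"
    and M0: "in_block (k - e0 + 1) M0" and part0: "m \<le> N1_val (k - e0 + 1) M0 + e0"
    and M1: "in_block (k - e1 + 1) M1" and part1: "m \<le> N1_val (k - e1 + 1) M1 + e1"
  shows False
proof -
  have "block_start L + L = 2 ^ L" "block_start (Suc L) + Suc L = 2 * 2 ^ L"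
    using block_start_add_self[of L] block_start_add_self[of "Suc L"] by simp_all
  then show False
    using exceptional_split_part[OF L k m e(2) M0 part0]
      exceptional_split_part[OF L k m e(3) M1 part1] k m e part0
    by linarith
qed

lemma pdp_empty_above:
  assumes g: "\<And>j Mj. j < k \<Longrightarrow> in_block j Mj \<Longrightarrow> g j = enat (N1_val j Mj)"
    and k: "in_block k M" "7 \<le> k" and m: "N1_val k M < m"
  shows "pdp g k m = {}"
proof (rule ccontr)
  assume "pdp g k m \<noteq> {}"
  then obtain e0 e1 where pair: "(e0, e1) \<in> pdp g k m" by auto
  then have e: "2 \<le> e0" "2 \<le> e1" unfolding pdp_def by auto
  obtain M0 where M0: "in_block (k - e0 + 1) M0" using in_block_exists_add_one by blast
  obtain M1 where M1: "in_block (k - e1 + 1) M1" using in_block_exists_add_one by blast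
  have parts: "e0 \<le> k" "e1 \<le> k" "e0 + e1 = m" "e0 \<le> e1"
    "m \<le> N1_val (k - e0 + 1) M0 + e0" "m \<le> N1_val (k - e1 + 1) M1 + e1"
    using pair by (simp_all add: mem_pdp_iff[OF g e M0 M1])
  show False
  proof (cases "exceptional k M")
    case True
    have "M \<noteq> 3"
    proof
      assume "M = 3"
      then show False using True k(2) by (simp add: exceptional_def block_start_def)
    qed
    then obtain L where M_Suc: "M = Suc L" "3 \<le> L"
      using True unfolding exceptional_def by (cases M) auto
    moreover have "k = block_start (Suc L) + 1" "k + Suc L \<le> m"
      using True m N1_val_exceptional[OF True] M_Suc unfolding exceptional_def by auto
    ultimately show False
      using exceptional_split_bound[OF _ _ _ parts(3,1,2) M0 parts(5) M1 parts(6)] by blast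
  next
    case False
    then show False
      using regular_split_bound[OF k(1) _ parts(3,4,2) M1 parts(6)] m N1_val_regular[OF False]
      by simp
  qed
qed

lemma f_init_in_block:
  assumes "in_block k M" "2 \<le> k" "k \<le> 6"
  shows "f_init k = enat (N1_val k M)"
proof -
  have "in_block 2 2" "in_block 3 2" "in_block 4 2" "in_block 5 3" "in_block 6 3"
    unfolding in_block_def block_start_def by auto
  moreover have k: "k \<in> {2, 3, 4, 5, 6}" using assms by auto
  ultimately have "M = (if k \<le> 4 then 2 else 3)"
    using in_block_unique[OF assms(1)] by auto
  then show ?thesis
    using k by (auto simp: f_init_def N1_val_def exceptional_def block_start_def)
qed

lemma nM_step:
  assumes k: "in_block k M" "2 \<le> k"
    and IH: "\<And>j Mj. j < k \<Longrightarrow> in_block j Mj \<Longrightarrow> nM f_init j = enat (N1_val j Mj)"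
  shows "nM f_init k = enat (N1_val k M)"
proof -
  define g where "g = (\<lambda>j. if j < k then nM f_init j else \<infinity>)"
  define P where "P = (\<lambda>m. 4 \<le> m \<and> m \<le> 2 * k \<and> pdp g k m \<noteq> {})"
  have nk: "nM f_init k = min (enat (Greatest P)) (f_init k)"
    using k by (subst nM.simps) (simp add: g_def P_def)
  have g: "\<And>j Mj. j < k \<Longrightarrow> in_block j Mj \<Longrightarrow> g j = enat (N1_val j Mj)"
    using IH unfolding g_def by simp
  have feasible: "pdp g k (N1_val k M) \<noteq> {}"
    using pdp_exceptional_nonempty[OF g k(1)] pdp_regular_nonempty[OF g k] by blast
  then obtain e0 e1 where "(e0, e1) \<in> pdp g k (N1_val k M)" by auto
  then have "P (N1_val k M)" unfolding P_def pdp_def using feasible by auto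
  then have Greatest_ge: "N1_val k M \<le> Greatest P"
    by (rule Greatest_le_nat[where b = "2 * k"]) (simp add: P_def)
  show ?thesis
  proof (cases "k \<le> 6")
    case True
    then show ?thesis using nk Greatest_ge f_init_in_block[OF k] by (simp add: min_def)
  next
    case False
    have "Greatest P = N1_val k M"
    proof (rule Greatest_equality)
      show "y \<le> N1_val k M" if "P y" for y
        using that pdp_empty_above[OF g k(1)] False unfolding P_def by force
    qed fact
    then show ?thesis using nk False by (simp add: f_init_def)
  qed
qed

lemma nM_in_block: "in_block k M \<Longrightarrow> nM f_init k = enat (N1_val k M)"
proof (induction k arbitrary: M rule: less_induct)
  case (less k)
  show ?case
  proof (cases "2 \<le> k")
    case True
    then show ?thesis using nM_step less by blast
  next
    case False
    then have "k = 1" using less.prems block_start_mono[of 1 M]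
      unfolding in_block_def block_start_def by auto
    moreover have "M = 1" using less.prems in_block_unique[OF _ in_block_one] \<open>k = 1\<close> by blast
    ultimately show ?thesis
      by (simp add: nM.simps N1_val_def exceptional_def numeral_eq_enat)
  qed
qed

theorem theorem14p7:
  shows "(\<forall>k::nat. 1 \<le> k \<longrightarrow> k \<notin> {2 ^ m - m + 1 | m::nat. 3 \<le> m} \<longrightarrow>
            nM f_init k = enat (Nfun k)) \<and>
         (\<forall>m::nat. 3 \<le> m \<longrightarrow>
            nM f_init (2 ^ m - m + 1) = enat (Nfun (2 ^ m - m + 1) - 1) \<and>
            nM f_init (2 ^ m - m + 1) = enat (2 ^ m))"
proof (intro conjI allI impI)
  fix k :: nat
  assume "1 \<le> k" and "k \<notin> {2 ^ m - m + 1 | m::nat. 3 \<le> m}"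
  moreover obtain M where M: "in_block k M" using in_block_exists \<open>1 \<le> k\<close> by blast
  ultimately have "\<not> exceptional k M" unfolding exceptional_def block_start_def by blast
  then show "nM f_init k = enat (Nfun k)"
    using nM_in_block[OF M] Nfun_in_block[OF M] N1_val_regular by simp
next
  fix m :: nat
  assume "3 \<le> m"
  define k where "k = 2 ^ m - m + 1"
  have "k = block_start m + 1" unfolding k_def block_start_def ..
  then have exc: "exceptional k m" using \<open>3 \<le> m\<close> unfolding exceptional_def by simp
  have "in_block k m"
    using \<open>k = block_start m + 1\<close> \<open>3 \<le> m\<close> double_le_power_two[of m]
      block_start_add_self[of m] block_start_add_self[of "Suc m"]
    unfolding in_block_def by simp
  then have "nM f_init k = enat (Nfun k - 1)" "Nfun k - 1 = 2 ^ m"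
    using nM_in_block Nfun_in_block N1_val_exceptional[OF exc]
      \<open>k = block_start m + 1\<close> block_start_add_self[of m] by simp_all
  then show "nM f_init (2 ^ m - m + 1) = enat (Nfun (2 ^ m - m + 1) - 1)"
    and "nM f_init (2 ^ m - m + 1) = enat (2 ^ m)" unfolding k_def by simp_all
qed

end
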